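(* Let $\Bbbk$ be an algebraically closed field of characteristic zero, $G$ a finite group, $\chi:G\to\Bbbk^\times$ a linear character, $g\in Z(G)$, $n\geq 2$ the multiplicative order of $\chi(g)$, and $H$ the $\Bbbk$-algebra generated by $\Bbbk G$ and $z$ with relations $z^n=0$, $zs=\chi(s)sz$ ($s\in G$). Then for any nonzero $h_0,h_1,\dots,h_{n-1}\in\Bbbk G$, the ideals $(h_0),(zh_1),\dots,(z^{n-1}h_{n-1})$ are pairwise distinct.
   Context: $(a)$ denotes the two-sided ideal of $H$ generated by $a$. *)

theory Defs
  imports "HOL-Algebra.Ideal" "HOL-Computational_Algebra.Polynomial"
begin

definition alg_closed :: "'k::field itself \<Rightarrow> bool" where
  "alg_closed _ \<longleftrightarrow> (\<forall>p::'k poly. 0 < degree p \<longrightarrow> (\<exists>x. poly p x = 0))"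

(* The algebra H generated by kG and z subject to z^n = 0, z s = chi(s) s z,
   realised on its normal-form basis { z^i s : 0 \<le> i < n, s \<in> G }.
   An element is a coefficient function c :: nat \<times> 'g \<Rightarrow> 'k, c(i,s) being
   the coefficient of z^i s; it vanishes outside {0..<n} \<times> carrier G.
   Product rule: (z^i s)(z^j t) = chi(s)^(-j) z^(i+j) (s t)  (= 0 if i+j \<ge> n),
   since s z = chi(s)^(-1) z s. *)
definition skew_alg :: "('g, 'b) monoid_scheme \<Rightarrow> ('g \<Rightarrow> 'k::field) \<Rightarrow> nat \<Rightarrow> ((nat \<times> 'g) \<Rightarrow> 'k) ring" where
  "skew_alg G \<chi> n = \<lparr>
     carrier = {c. \<forall>k u. (n \<le> k \<or> u \<notin> carrier G) \<longrightarrow> c (k, u) = 0},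
     monoid.mult = (\<lambda>a b (k, u). if k < n \<and> u \<in> carrier G then
               (\<Sum>i\<in>{..k}. \<Sum>s\<in>carrier G.
                   inverse (\<chi> s) ^ (k - i) * a (i, s) * b (k - i, inv\<^bsub>G\<^esub> s \<otimes>\<^bsub>G\<^esub> u))
             else 0),
     monoid.one = (\<lambda>(k, u). if k = 0 \<and> u = \<one>\<^bsub>G\<^esub> then 1 else 0),
     ring.zero = (\<lambda>_. 0),
     ring.add = (\<lambda>a b x. a x + b x) \<rparr>"

definition zpow_times :: "('g, 'b) monoid_scheme \<Rightarrow> nat \<Rightarrow> ('g \<Rightarrow> 'k::field) \<Rightarrow> (nat \<times> 'g) \<Rightarrow> 'k" where
  "zpow_times G i h = (\<lambda>(k, u). if k = i \<and> u \<in> carrier G then h u else 0)"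

end

theory Submission
  imports Defs
begin

(* Elements of H whose coefficients vanish in z-degree below j form a two-sided ideal, namely
   z^j H, since the product formula never lowers z-degrees. For i < j this ideal contains z^j h_j
   but not z^i h_i, so the ideals (z^i h_i) and (z^j h_j) differ. The real work is showing that
   the normal-form multiplication is associative, i.e. that H is a ring at all; the associativity
   computation reindexes the group sum by a left translation. *)

lemma sum_atMost_diagonal_swap:
  "(\<Sum>i\<le>k. \<Sum>p\<le>i. f p i) = (\<Sum>p\<le>(k::nat). \<Sum>q\<le>k - p. f p (p + q) :: 'a::comm_monoid_add)"
proof -
  have "(\<Sum>i\<le>k. \<Sum>p\<le>i. f p i) = (\<Sum>i\<le>k. \<Sum>p\<le>i. f p (p + (i - p)))"
    by (intro sum.cong) auto
  also have "\<dots> = (\<Sum>(p, q)\<in>{(p, q). p + q \<le> k}. f p (p + q))"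
    by (rule sum.triangle_reindex_eq[symmetric])
  also have "{(p, q). p + q \<le> k} = (SIGMA p:{..k}. {..k - p})"
    by auto
  finally show ?thesis
    by (simp add: sum.Sigma)
qed

lemma sum_sum_delta:
  assumes "finite A" "finite B"
  shows "(\<Sum>x\<in>A. \<Sum>y\<in>B. if x = x\<^sub>0 \<and> y = y\<^sub>0 then f x y else 0) = (if x\<^sub>0 \<in> A \<and> y\<^sub>0 \<in> B then f x\<^sub>0 y\<^sub>0 else 0)"
proof -
  have "(\<Sum>y\<in>B. if x = x\<^sub>0 \<and> y = y\<^sub>0 then f x y else 0) = (if x = x\<^sub>0 \<and> y\<^sub>0 \<in> B then f x y\<^sub>0 else 0)" for x
    using assms by (cases "x = x\<^sub>0") simp_all
  then show ?thesis
    using assms by (simp flip: if_if_eq_conj)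
qed

lemma (in group) sum_carrier_translate:
  assumes "t \<in> carrier G"
  shows "(\<Sum>s\<in>carrier G. f s) = (\<Sum>r\<in>carrier G. f (t \<otimes> r))"
  using sum.reindex[OF inj_on_cmult[OF assms], of f] surj_const_mult[OF assms] by simp

lemma carrier_skew_alg:
  "c \<in> carrier (skew_alg G \<chi> n) \<longleftrightarrow> (\<forall>k u. (n \<le> k \<or> u \<notin> carrier G) \<longrightarrow> c (k, u) = 0)"
  by (simp add: skew_alg_def)

lemma skew_alg_mult:
  "(a \<otimes>\<^bsub>skew_alg G \<chi> n\<^esub> b) (k, u) =
     (if k < n \<and> u \<in> carrier G then
        \<Sum>i\<le>k. \<Sum>s\<in>carrier G. inverse (\<chi> s) ^ (k - i) * a (i, s) * b (k - i, inv\<^bsub>G\<^esub> s \<otimes>\<^bsub>G\<^esub> u)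
      else 0)"
  by (simp add: skew_alg_def)

lemma skew_alg_add: "(a \<oplus>\<^bsub>skew_alg G \<chi> n\<^esub> b) x = a x + b x"
  by (simp add: skew_alg_def)

lemma skew_alg_zero: "\<zero>\<^bsub>skew_alg G \<chi> n\<^esub> = (\<lambda>_. 0)"
  by (simp add: skew_alg_def)

lemma skew_alg_one: "\<one>\<^bsub>skew_alg G \<chi> n\<^esub> (k, u) = (if k = 0 \<and> u = \<one>\<^bsub>G\<^esub> then 1 else 0)"
  by (simp add: skew_alg_def)

lemma skew_alg_mult_closed: "a \<otimes>\<^bsub>skew_alg G \<chi> n\<^esub> b \<in> carrier (skew_alg G \<chi> n)"
  by (simp add: carrier_skew_alg skew_alg_mult)

lemma abelian_group_skew_alg: "abelian_group (skew_alg G \<chi> n)"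
proof (rule abelian_groupI)
  fix x
  assume "x \<in> carrier (skew_alg G \<chi> n)"
  then show "\<exists>y\<in>carrier (skew_alg G \<chi> n). y \<oplus>\<^bsub>skew_alg G \<chi> n\<^esub> x = \<zero>\<^bsub>skew_alg G \<chi> n\<^esub>"
    by (intro bexI[of _ "\<lambda>v. - x v"]) (auto simp: skew_alg_zero skew_alg_add carrier_skew_alg)
qed (auto simp: skew_alg_zero skew_alg_add carrier_skew_alg fun_eq_iff ac_simps)

lemma skew_alg_a_inv:
  assumes "a \<in> carrier (skew_alg G \<chi> n)"
  shows "\<ominus>\<^bsub>skew_alg G \<chi> n\<^esub> a = (\<lambda>x. - a x)"
  using assms by (intro abelian_group.minus_equality[OF abelian_group_skew_alg])
    (auto simp: skew_alg_zero skew_alg_add carrier_skew_alg)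

definition z_filtration ::
    "('g, 'b) monoid_scheme \<Rightarrow> ('g \<Rightarrow> 'k::field) \<Rightarrow> nat \<Rightarrow> nat \<Rightarrow> ((nat \<times> 'g) \<Rightarrow> 'k) set"
  where "z_filtration G \<chi> n j = {c \<in> carrier (skew_alg G \<chi> n). \<forall>k<j. \<forall>u. c (k, u) = 0}"

locale finite_group_character = G: group G
  for G :: "('g, 'b) monoid_scheme" (structure) and \<chi> :: "'g \<Rightarrow> 'k::field" +
  assumes finite_carrier: "finite (carrier G)"
    and character_nonzero: "s \<in> carrier G \<Longrightarrow> \<chi> s \<noteq> 0"
    and character_mult: "s \<in> carrier G \<Longrightarrow> t \<in> carrier G \<Longrightarrow> \<chi> (s \<otimes> t) = \<chi> s * \<chi> t"
begin

abbreviation H :: "nat \<Rightarrow> ((nat \<times> 'g) \<Rightarrow> 'k) ring"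
  where "H n \<equiv> skew_alg G \<chi> n"

lemma character_one: "\<chi> \<one> = 1"
  using character_mult[of \<one> \<one>] character_nonzero[of \<one>] by simp

lemma skew_alg_mult_mult_left:
  assumes "k < n" "u \<in> carrier G"
  shows "((a \<otimes>\<^bsub>H n\<^esub> b) \<otimes>\<^bsub>H n\<^esub> c) (k, u) = (\<Sum>i\<le>k. \<Sum>p\<le>i. \<Sum>t\<in>carrier G. \<Sum>r\<in>carrier G.
    inverse (\<chi> t) ^ (k - p) * inverse (\<chi> r) ^ (k - i) * a (p, t) * b (i - p, r) * c (k - i, inv r \<otimes> (inv t \<otimes> u)))"
    (is "_ = ?rhs")
proof -
  have translate: "(\<Sum>s\<in>carrier G. inverse (\<chi> s) ^ (k - i)
        * (inverse (\<chi> t) ^ (i - p) * a (p, t) * b (i - p, inv t \<otimes> s)) * c (k - i, inv s \<otimes> u))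
      = (\<Sum>r\<in>carrier G. inverse (\<chi> t) ^ (k - p) * inverse (\<chi> r) ^ (k - i) * a (p, t) * b (i - p, r)
        * c (k - i, inv r \<otimes> (inv t \<otimes> u)))"
    if "p \<le> i" "i \<le> k" "t \<in> carrier G" for i p t
  proof -
    have power_split: "x ^ (k - p) = x ^ (k - i) * x ^ (i - p)" for x :: 'k
      using that by (simp flip: power_add)
    show ?thesis
      by (subst G.sum_carrier_translate[OF \<open>t \<in> carrier G\<close>], rule sum.cong[OF refl])
        (use that assms(2) in \<open>simp add: power_split character_mult power_mult_distrib
          G.inv_mult_group G.m_assoc flip: G.m_assoc\<close>)
  qed
  have "((a \<otimes>\<^bsub>H n\<^esub> b) \<otimes>\<^bsub>H n\<^esub> c) (k, u) = (\<Sum>i\<le>k. \<Sum>s\<in>carrier G. \<Sum>p\<le>i. \<Sum>t\<in>carrier G.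
      inverse (\<chi> s) ^ (k - i) * (inverse (\<chi> t) ^ (i - p) * a (p, t) * b (i - p, inv t \<otimes> s))
        * c (k - i, inv s \<otimes> u))"
    using assms by (simp add: skew_alg_mult sum_distrib_left sum_distrib_right)
  also have "\<dots> = (\<Sum>i\<le>k. \<Sum>p\<le>i. \<Sum>t\<in>carrier G. \<Sum>s\<in>carrier G.
      inverse (\<chi> s) ^ (k - i) * (inverse (\<chi> t) ^ (i - p) * a (p, t) * b (i - p, inv t \<otimes> s))
        * c (k - i, inv s \<otimes> u))"
    by (rule sum.cong[OF refl], subst sum.swap, rule sum.cong[OF refl], rule sum.swap)
  also have "\<dots> = ?rhs"
    by (intro translate sum.cong refl) auto
  finally show ?thesis .
qed

lemma skew_alg_mult_mult_right:
  assumes "k < n" "u \<in> carrier G"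
  shows "(a \<otimes>\<^bsub>H n\<^esub> (b \<otimes>\<^bsub>H n\<^esub> c)) (k, u) = (\<Sum>p\<le>k. \<Sum>q\<le>k - p. \<Sum>t\<in>carrier G. \<Sum>r\<in>carrier G.
    inverse (\<chi> t) ^ (k - p) * inverse (\<chi> r) ^ (k - p - q) * a (p, t) * b (q, r) * c (k - p - q, inv r \<otimes> (inv t \<otimes> u)))"
    (is "_ = ?rhs")
proof -
  have "(a \<otimes>\<^bsub>H n\<^esub> (b \<otimes>\<^bsub>H n\<^esub> c)) (k, u) = (\<Sum>p\<le>k. \<Sum>t\<in>carrier G. \<Sum>q\<le>k - p. \<Sum>r\<in>carrier G.
      inverse (\<chi> t) ^ (k - p) * a (p, t) * (inverse (\<chi> r) ^ (k - p - q) * b (q, r)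
        * c (k - p - q, inv r \<otimes> (inv t \<otimes> u))))"
    using assms by (simp add: skew_alg_mult sum_distrib_left less_imp_diff_less)
  also have "\<dots> = ?rhs"
    by (rule sum.cong[OF refl], subst sum.swap) (simp add: mult_ac)
  finally show ?thesis .
qed

lemma skew_alg_mult_assoc:
  "(a \<otimes>\<^bsub>H n\<^esub> b) \<otimes>\<^bsub>H n\<^esub> c = a \<otimes>\<^bsub>H n\<^esub> (b \<otimes>\<^bsub>H n\<^esub> c)"
proof (intro ext, clarify)
  fix k u
  show "((a \<otimes>\<^bsub>H n\<^esub> b) \<otimes>\<^bsub>H n\<^esub> c) (k, u) = (a \<otimes>\<^bsub>H n\<^esub> (b \<otimes>\<^bsub>H n\<^esub> c)) (k, u)"
  proof (cases "k < n \<and> u \<in> carrier G")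
    case True
    then show ?thesis
      by (simp only: skew_alg_mult_mult_left skew_alg_mult_mult_right sum_atMost_diagonal_swap
          add_diff_cancel_left' diff_diff_left)
  qed (simp only: skew_alg_mult[where k = k and u = u] if_False)
qed

lemma skew_alg_one_mult:
  assumes "b \<in> carrier (H n)"
  shows "\<one>\<^bsub>H n\<^esub> \<otimes>\<^bsub>H n\<^esub> b = b"
proof (intro ext, clarify)
  fix k u
  show "(\<one>\<^bsub>H n\<^esub> \<otimes>\<^bsub>H n\<^esub> b) (k, u) = b (k, u)"
  proof (cases "k < n \<and> u \<in> carrier G")
    case True
    then have "(\<one>\<^bsub>H n\<^esub> \<otimes>\<^bsub>H n\<^esub> b) (k, u) = (\<Sum>i\<le>k. \<Sum>s\<in>carrier G. if i = 0 \<and> s = \<one> then b (k, u) else 0)"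
      by (auto simp: skew_alg_mult skew_alg_one character_one intro!: sum.cong)
    then show ?thesis
      by (simp add: sum_sum_delta finite_carrier)
  qed (use assms in \<open>auto simp: skew_alg_mult carrier_skew_alg\<close>)
qed

lemma skew_alg_mult_one:
  assumes "b \<in> carrier (H n)"
  shows "b \<otimes>\<^bsub>H n\<^esub> \<one>\<^bsub>H n\<^esub> = b"
proof (intro ext, clarify)
  fix k u
  show "(b \<otimes>\<^bsub>H n\<^esub> \<one>\<^bsub>H n\<^esub>) (k, u) = b (k, u)"
  proof (cases "k < n \<and> u \<in> carrier G")
    case True
    have "inv s \<otimes> u = \<one> \<longleftrightarrow> s = u" if "s \<in> carrier G" for s
      using that True by (metis G.inv_closed G.inv_comm G.inv_inv G.inv_equality G.r_inv)
    with True have "(b \<otimes>\<^bsub>H n\<^esub> \<one>\<^bsub>H n\<^esub>) (k, u) = (\<Sum>i\<le>k. \<Sum>s\<in>carrier G. if i = k \<and> s = u then b (k, u) else 0)"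
      by (auto simp: skew_alg_mult skew_alg_one intro!: sum.cong)
    then show ?thesis
      using True by (simp add: sum_sum_delta finite_carrier)
  qed (use assms in \<open>auto simp: skew_alg_mult carrier_skew_alg\<close>)
qed

lemma skew_alg_one_closed: "0 < n \<Longrightarrow> \<one>\<^bsub>H n\<^esub> \<in> carrier (H n)"
  by (simp add: carrier_skew_alg skew_alg_one)

lemma ring_skew_alg:
  assumes "0 < n"
  shows "ring (H n)"
proof (rule ringI[OF abelian_group_skew_alg])
  show "monoid (H n)"
    using assms by (intro monoidI)
      (simp_all add: skew_alg_mult_closed skew_alg_one_closed skew_alg_mult_assoc
        skew_alg_one_mult skew_alg_mult_one)
qed (auto simp: skew_alg_mult skew_alg_add distrib_left distrib_right sum.distrib fun_eq_iff)

lemma ideal_z_filtration: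
  assumes "0 < n"
  shows "ideal (z_filtration G \<chi> n j) (H n)"
proof -
  interpret ring "H n"
    using ring_skew_alg[OF assms] .
  show ?thesis
  proof (rule idealI[OF ring_axioms])
    show "subgroup (z_filtration G \<chi> n j) (add_monoid (H n))"
      by (rule add.subgroupI)
        (auto simp: z_filtration_def carrier_skew_alg skew_alg_zero skew_alg_a_inv skew_alg_add
          intro!: exI[of _ "\<zero>\<^bsub>H n\<^esub>"])
  qed (auto simp: z_filtration_def skew_alg_mult skew_alg_mult_closed intro!: sum.neutral)
qed

lemma genideal_zpow_times_neq:
  assumes "i < j" "j < n" and "s \<in> carrier G" "h s \<noteq> 0"
  shows "genideal (H n) {zpow_times G i h} \<noteq> genideal (H n) {zpow_times G j h'}"
proof
  interpret ring "H n"
    using ring_skew_alg assms by simp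
  assume eq: "genideal (H n) {zpow_times G i h} = genideal (H n) {zpow_times G j h'}"
  have "zpow_times G i h \<in> genideal (H n) {zpow_times G i h}"
    using assms by (intro genideal_self') (simp add: carrier_skew_alg zpow_times_def)
  also have "\<dots> \<subseteq> z_filtration G \<chi> n j"
    unfolding eq using assms
    by (intro genideal_minimal ideal_z_filtration)
      (auto simp: z_filtration_def carrier_skew_alg zpow_times_def)
  finally have "zpow_times G i h (i, s) = 0"
    using assms(1) by (simp add: z_filtration_def)
  with assms show False
    by (simp add: zpow_times_def)
qed

end

theorem lemma3p4:
  fixes G :: "('g, 'b) monoid_scheme"
    and \<chi> :: "'g \<Rightarrow> 'k::field_char_0"
    and g :: 'g and n :: nat
    and h :: "nat \<Rightarrow> 'g \<Rightarrow> 'k"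
  assumes "alg_closed TYPE('k)"
    and "group G" and "finite (carrier G)"
    and "\<And>s. s \<in> carrier G \<Longrightarrow> \<chi> s \<noteq> 0"
    and "\<And>s t. s \<in> carrier G \<Longrightarrow> t \<in> carrier G \<Longrightarrow> \<chi> (s \<otimes>\<^bsub>G\<^esub> t) = \<chi> s * \<chi> t"
    and "g \<in> carrier G" and "\<And>s. s \<in> carrier G \<Longrightarrow> g \<otimes>\<^bsub>G\<^esub> s = s \<otimes>\<^bsub>G\<^esub> g"
    and "2 \<le> n" and "\<chi> g ^ n = 1" and "\<And>m. 0 < m \<Longrightarrow> m < n \<Longrightarrow> \<chi> g ^ m \<noteq> 1"
    and "\<And>i. i < n \<Longrightarrow> \<exists>s\<in>carrier G. h i s \<noteq> 0"
  shows "\<forall>i<n. \<forall>j<n. i \<noteq> j \<longrightarrow>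
           genideal (skew_alg G \<chi> n) {zpow_times G i (h i)}
             \<noteq> genideal (skew_alg G \<chi> n) {zpow_times G j (h j)}"
proof -
  interpret finite_group_character G \<chi>
    using assms(2-5) by (simp add: finite_group_character_def finite_group_character_axioms_def)
  have "genideal (H n) {zpow_times G i (h i)} \<noteq> genideal (H n) {zpow_times G j (h j)}"
    if "i < j" "j < n" for i j
    using assms(11)[of i] that genideal_zpow_times_neq by force
  then show ?thesis
    by (metis linorder_neqE_nat)
qed

end
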